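(* Let $\{f_t\}$ be the sequence generated by POLK with $f_0=0$, and suppose Assumptions (A1)–(A4) hold. Then for all $t$, $$\mathbb E\big[\|f_{t+1}-f^*\|_{\mathcal H}^2\mid\mathcal F_t\big]\le\|f_t-f^*\|_{\mathcal H}^2-2\eta_t\,[R(f_t)-R(f^* )]+2\epsilon_t\|f_t-f^*\|_{\mathcal H}+\eta_t^2\sigma^2.$$
   Context: Setting: $\mathcal X\subset\mathbb R^p$, $\mathcal Y\subset\mathbb R$; $\mathcal H$ is a reproducing kernel Hilbert space of functions $f:\mathcal X\to\mathbb R$ with reproducing kernel $\kappa$ (so $\langle f,\kappa(x,\cdot)\rangle_{\mathcal H}=f(x)$). $(x,y)$ is a random pair on $\mathcal X\times\mathcal Y$ with a fixed joint distribution, and $(x_t,y_t)$, $t=0,1,2,\dots$ are i.i.d. copies of it. The loss is $\ell:\mathbb R\times\mathcal Y\to\mathbb R$, $\ell'(z,y)=\partial\ell(z,y)/\partial z$. With $\lambda>0$, the regularized expected risk is $R(f)=\mathbb E_{x,y}[\ell(f(x),y)]+\frac{\lambda}{2}\|f\|_{\mathcal H}^2$ and $f^*=\arg\min_{f\in\mathcal H}R(f)$. POLK (Parsimonious Online Learning with Kernels): given step-sizes $\eta_t>0$ and approximation budgets $\epsilon_t>0$, set $f_0=0$ with empty dictionary $D_0$. At step $t$, with $f_t=\sum_{n=1}^{M_t}w_n\kappa(d_n,\cdot)$ parameterized by dictionary $D_t=[d_1,\dots,d_{M_t}]$, form $\tilde f_{t+1}=(1-\eta_t\lambda)f_t-\eta_t\ell'(f_t(x_t),y_t)\kappa(x_t,\cdot)$,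 represented by dictionary $\tilde D_{t+1}=[D_t,\,x_t]$. Then apply destructive kernel orthogonal matching pursuit (KOMP) with budget $\epsilon_t$: starting from $D=\tilde D_{t+1}$, repeatedly compute for each remaining element $d_j$ the error $\gamma_j=\min_{w}\|\tilde f_{t+1}-\sum_{k\neq j}w_k\kappa(d_k,\cdot)\|_{\mathcal H}$; if $\min_j\gamma_j>\epsilon_t$ stop, otherwise remove the minimizing element and continue (while the dictionary is nonempty). The output dictionary is $D_{t+1}$, and $f_{t+1}$ is the orthogonal projection of $\tilde f_{t+1}$ onto $\mathcal H_{D_{t+1}}=\mathrm{span}\{\kappa(d,\cdot):d\in D_{t+1}\}$; thus $\|f_{t+1}-\tilde f_{t+1}\|_{\mathcal H}\le\epsilon_t$. Define $\hat\nabla_t=\ell'(f_t(x_t),y_t)\kappa(x_t,\cdot)+\lambda f_t$ and the projected stochastic gradient $\tilde\nabla_t=(f_t-f_{t+1})/\eta_t$, so $f_{t+1}=f_t-\eta_t\tilde\nabla_t$. $\mathcal F_t$ denotes the sigma-algebra generated by the algorithm history up to time $t$ (so that $\mathbb E[\hat\nabla_t\mid\mathcal F_t]=\nabla_f R(f_t)$). Assumptions: (A1) $\mathcal X$ and $\mathcal Y$ are compact and $\sup_{x\in\mathcal X}\sqrt{\kappa(x,x)}=X<\infty$. (A2) $\ell$ is $C$-Lipschitz in its first argument: $|\ell(z,y)-\ell(z',y)|\le C|z-z'|$ for all $z,z'\in\mathbb R$, $y\in\mathcal Y$. (A3) $\ell(z,y)$ is convex and differentiable in $z$ on $\mathbb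 R$ for all $y$. (A4) $\mathbb E[\|\tilde\nabla_t\|_{\mathcal H}^2\mid\mathcal F_t]\le\sigma^2$ for all $t$. *)

theory Defs
  imports "HOL-Analysis.Analysis" "HOL-Probability.Probability"
begin

(* Abstract RKHS: 'h is a real Hilbert space, kf x is the feature kernel(x,.) in H,
   and f(x) = <f, kf x> (reproducing property). *)
definition heval :: "('a \<Rightarrow> 'h::real_inner) \<Rightarrow> 'h \<Rightarrow> 'a \<Rightarrow> real" where
  "heval kf f x = inner f (kf x)"

definition hspan :: "('a \<Rightarrow> 'h::real_inner) \<Rightarrow> 'a list \<Rightarrow> 'h set" where
  "hspan kf D = span (kf ` set D)"

definition hproj :: "'h::real_inner set \<Rightarrow> 'h \<Rightarrow> 'h" where
  "hproj S g = (SOME p. p \<in> S \<and> (\<forall>q\<in>S. dist g p \<le> dist g q))"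

definition remove_at :: "nat \<Rightarrow> 'a list \<Rightarrow> 'a list" where
  "remove_at j D = take j D @ drop (Suc j) D"

definition komp_gamma :: "('a \<Rightarrow> 'h::real_inner) \<Rightarrow> 'h \<Rightarrow> 'a list \<Rightarrow> nat \<Rightarrow> real" where
  "komp_gamma kf g D j = infdist g (hspan kf (remove_at j D))"

(* destructive KOMP, with n = number of remaining iterations allowed (fuel);
   ties in the minimizing index are broken by taking the first minimizer *)
primrec komp_aux :: "nat \<Rightarrow> ('a \<Rightarrow> 'h::real_inner) \<Rightarrow> real \<Rightarrow> 'h \<Rightarrow> 'a list \<Rightarrow> 'a list" where
  "komp_aux 0 kf eps g D = D"
| "komp_aux (Suc n) kf eps g D =
     (if D = [] then D
      else (let j = arg_min_list (komp_gamma kf g D) [0..<length D] in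
            if komp_gamma kf g D j > eps then D
            else komp_aux n kf eps g (remove_at j D)))"

definition komp :: "('a \<Rightarrow> 'h::real_inner) \<Rightarrow> real \<Rightarrow> 'h \<Rightarrow> 'a list \<Rightarrow> 'a list" where
  "komp kf eps g D = komp_aux (length D) kf eps g D"

definition polk_step ::
  "('a \<Rightarrow> 'h::real_inner) \<Rightarrow> (real \<Rightarrow> real \<Rightarrow> real) \<Rightarrow> real \<Rightarrow> real \<Rightarrow> real
   \<Rightarrow> 'a list \<times> 'h \<Rightarrow> 'a \<times> real \<Rightarrow> 'a list \<times> 'h" where
  "polk_step kf dl lam eta eps st z =
     (let D = fst st; f = snd st; x = fst z; y = snd z;
          g = (1 - eta * lam) *\<^sub>R f - (eta * dl (heval kf f x) y) *\<^sub>R kf x;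
          D' = komp kf eps g (D @ [x])
      in (D', hproj (hspan kf D') g))"

primrec polk ::
  "('a \<Rightarrow> 'h::real_inner) \<Rightarrow> (real \<Rightarrow> real \<Rightarrow> real) \<Rightarrow> real \<Rightarrow> (nat \<Rightarrow> real) \<Rightarrow> (nat \<Rightarrow> real)
   \<Rightarrow> (nat \<Rightarrow> 'a \<times> real) \<Rightarrow> nat \<Rightarrow> 'a list \<times> 'h" where
  "polk kf dl lam eta eps s 0 = ([], 0)"
| "polk kf dl lam eta eps s (Suc t) = polk_step kf dl lam (eta t) (eps t) (polk kf dl lam eta eps s t) (s t)"

definition risk ::
  "('a \<times> real) measure \<Rightarrow> ('a \<Rightarrow> 'h::real_inner) \<Rightarrow> (real \<Rightarrow> real \<Rightarrow> real) \<Rightarrow> real \<Rightarrow> 'h \<Rightarrow> real" where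
  "risk P kf loss lam f = (\<integral>z. loss (heval kf f (fst z)) (snd z) \<partial>P) + lam / 2 * (norm f)\<^sup>2"

end

theory Submission imports Defs begin

text \<open>
  Write \<open>f\<^sub>t\<^sub>+\<^sub>1 = f\<^sub>t - \<eta> \<nabla>\<close>, so that
  \<open>\<parallel>f\<^sub>t\<^sub>+\<^sub>1 - f*\<parallel>\<^sup>2 = \<parallel>f\<^sub>t - f*\<parallel>\<^sup>2 - 2\<eta>\<langle>\<nabla>, f\<^sub>t - f*\<rangle> + \<eta>\<^sup>2\<parallel>\<nabla>\<parallel>\<^sup>2\<close>.
  The projected gradient \<open>\<nabla>\<close> differs from the stochastic gradient
  \<open>\<ell>'(f\<^sub>t(x),y) \<kappa>(x,\<cdot>) + \<lambda> f\<^sub>t\<close> by at most \<open>\<epsilon>/\<eta>\<close>, because every KOMP deletion keeps the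
  unprojected iterate within distance \<open>\<epsilon>\<close> of the span of the dictionary. The inner product of the
  stochastic gradient with \<open>f\<^sub>t - f*\<close> dominates the drop of the instantaneous regularized loss
  (tangent inequalities of the convex loss and of \<open>\<parallel>\<cdot>\<parallel>\<^sup>2\<close>), and the error term is handled by
  Cauchy-Schwarz. Integrating over the fresh sample \<open>(x\<^sub>t, y\<^sub>t)\<close> gives the bound. Only convexity
  and differentiability of the loss, integrability of the instantaneous loss and (A4) are used.
\<close>

lemma orthogonal_projection_finite_span_exists:
  fixes B :: "'h::real_inner set"
  assumes "finite B"
  shows "\<exists>p\<in>span B. \<forall>q\<in>span B. inner (g - p) q = 0"
  using assms
proof (induction B arbitrary: g rule: finite_induct)
  case empty
  show ?case by simp
next
  case (insert v B)
  obtain pv where pv: "pv \<in> span B" "\<And>q. q \<in> span B \<Longrightarrow> inner (v - pv) q = 0"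
    using insert.IH by blast
  obtain pg where pg: "pg \<in> span B" "\<And>q. q \<in> span B \<Longrightarrow> inner (g - pg) q = 0"
    using insert.IH by blast
  define u where "u = v - pv"
  have u_orth: "inner u q = 0" if "q \<in> span B" for q
    using pv(2)[OF that] by (simp add: u_def)
  have span_mono_insert: "span B \<subseteq> span (insert v B)"
    by (simp add: span_mono subset_insertI)
  show ?case
  proof (cases "u = 0")
    case True
    then have "v \<in> span B" using pv(1) by (simp add: u_def)
    then have "span (insert v B) = span B" by (simp add: span_redundant)
    then show ?thesis using pg by auto
  next
    case False
    define p where "p = pg + (inner g u / inner u u) *\<^sub>R u"
    have u_in: "u \<in> span (insert v B)"
      unfolding u_def using pv(1) span_mono_insert by (auto intro: span_diff span_base)
    show ?thesis
    proof (intro bexI ballI)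
      show "p \<in> span (insert v B)"
        unfolding p_def using pg(1) u_in span_mono_insert by (auto intro: span_add span_scale)
      fix q assume "q \<in> span (insert v B)"
      then obtain k where k: "q - k *\<^sub>R v \<in> span B" by (auto simp: span_breakdown_eq)
      have "q - k *\<^sub>R u = (q - k *\<^sub>R v) + k *\<^sub>R pv"
        by (simp add: u_def algebra_simps)
      then have b: "q - k *\<^sub>R u \<in> span B"
        using k pv(1) by (metis span_add span_scale)
      define b where "b = q - k *\<^sub>R u"
      have q: "q = b + k *\<^sub>R u" by (simp add: b_def)
      have "inner (g - p) q = inner (g - pg) b + k * inner (g - pg) u
            - (inner g u / inner u u) * (inner u b + k * inner u u)"
        unfolding q p_def by (simp add: inner_add_right inner_diff_left algebra_simps)
      also have "\<dots> = 0"
        using pg(2) u_orth b pg(1) False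
        by (simp add: b_def inner_diff_left inner_commute[of pg u] field_simps)
      finally show "inner (g - p) q = 0" .
    qed
  qed
qed

lemma closest_point_finite_span_exists:
  fixes B :: "'h::real_inner set"
  assumes "finite B"
  shows "\<exists>p\<in>span B. \<forall>q\<in>span B. dist g p \<le> dist g q"
proof -
  obtain p where p: "p \<in> span B" "\<And>q. q \<in> span B \<Longrightarrow> inner (g - p) q = 0"
    using orthogonal_projection_finite_span_exists[OF assms] by blast
  have "dist g p \<le> dist g q" if q: "q \<in> span B" for q
  proof -
    have "orthogonal (g - p) (p - q)"
      using p q by (simp add: orthogonal_def span_diff)
    then have "(dist g q)\<^sup>2 = (norm (g - p))\<^sup>2 + (norm (p - q))\<^sup>2"
      using norm_add_Pythagorean[of "g - p" "p - q"] by (simp add: dist_norm)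
    then have "(dist g p)\<^sup>2 \<le> (dist g q)\<^sup>2" by (simp add: dist_norm)
    then show ?thesis by (rule power2_le_imp_le) simp
  qed
  with p(1) show ?thesis by blast
qed

lemma hproj_closest:
  assumes "\<exists>p\<in>S. \<forall>q\<in>S. dist g p \<le> dist g q"
  shows "hproj S g \<in> S" and "dist g (hproj S g) = infdist g S"
proof -
  from someI_ex[OF assms[unfolded Bex_def]]
  have h: "hproj S g \<in> S" "\<And>q. q \<in> S \<Longrightarrow> dist g (hproj S g) \<le> dist g q"
    unfolding hproj_def by blast+
  show "hproj S g \<in> S" by (rule h(1))
  have "dist g (hproj S g) \<le> (INF q\<in>S. dist g q)"
    using h by (intro cINF_greatest) auto
  moreover have "(INF q\<in>S. dist g q) \<le> dist g (hproj S g)"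
    using h(1) by (intro cINF_lower bdd_belowI2[where m=0]) auto
  moreover have "S \<noteq> {}" using h(1) by blast
  ultimately show "dist g (hproj S g) = infdist g S"
    by (simp add: infdist_notempty)
qed

lemma hproj_hspan:
  "hproj (hspan kf D) g \<in> hspan kf D"
  "dist g (hproj (hspan kf D) g) = infdist g (hspan kf D)"
  using hproj_closest[OF closest_point_finite_span_exists[of "kf ` set D" g]]
  by (simp_all add: hspan_def)

lemma infdist_hspan_komp_aux_le:
  "infdist g (hspan kf D) \<le> eps \<Longrightarrow> infdist g (hspan kf (komp_aux n kf eps g D)) \<le> eps"
proof (induction n arbitrary: D)
  case 0
  then show ?case by simp
next
  case (Suc n)
  define j where "j = arg_min_list (komp_gamma kf g D) [0..<length D]"
  show ?case
  proof (cases "D = [] \<or> komp_gamma kf g D j > eps")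
    case True
    then show ?thesis using Suc.prems by (auto simp: j_def Let_def)
  next
    case False
    then have "infdist g (hspan kf (remove_at j D)) \<le> eps" by (simp add: komp_gamma_def)
    from Suc.IH[OF this] show ?thesis using False by (simp add: j_def Let_def)
  qed
qed

lemma infdist_hspan_komp_le:
  "infdist g (hspan kf D) \<le> eps \<Longrightarrow> infdist g (hspan kf (komp kf eps g D)) \<le> eps"
  unfolding komp_def by (rule infdist_hspan_komp_aux_le)

lemma polk_cong:
  "(\<forall>i<t. s' i = s i) \<Longrightarrow> polk kf dl lam eta eps s' t = polk kf dl lam eta eps s t"
  by (induction t) auto

lemma polk_in_hspan:
  "snd (polk kf dl lam eta eps s t) \<in> hspan kf (fst (polk kf dl lam eta eps s t))"
proof (induction t)
  case 0
  then show ?case by (simp add: hspan_def span_zero)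
next
  case (Suc t)
  then show ?case using hproj_hspan(1) by (simp add: polk_step_def Let_def del: hspan_def)
qed

lemma polk_step_dist_le:
  fixes kf :: "'a \<Rightarrow> 'h::real_inner"
  assumes "f \<in> hspan kf D" "eps \<ge> 0"
  shows "dist (snd (polk_step kf dl lam eta eps (D, f) (x, y)))
           ((1 - eta * lam) *\<^sub>R f - (eta * dl (heval kf f x) y) *\<^sub>R kf x) \<le> eps"
proof -
  define g where "g = (1 - eta * lam) *\<^sub>R f - (eta * dl (heval kf f x) y) *\<^sub>R kf x"
  have "f \<in> span (kf ` set (D @ [x]))"
    using assms(1) span_mono[of "kf ` set D" "kf ` set (D @ [x])"] by (auto simp: hspan_def)
  moreover have "kf x \<in> span (kf ` set (D @ [x]))" by (intro span_base) auto
  ultimately have "g \<in> hspan kf (D @ [x])"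
    unfolding g_def hspan_def by (intro span_diff span_scale)
  then have "infdist g (hspan kf (D @ [x])) \<le> eps" using assms(2) by simp
  then have "infdist g (hspan kf (komp kf eps g (D @ [x]))) \<le> eps"
    by (rule infdist_hspan_komp_le)
  then show ?thesis
    using hproj_hspan(2)[of g kf "komp kf eps g (D @ [x])"]
    by (simp add: polk_step_def Let_def g_def dist_commute)
qed

lemma perturbed_gradient_step_sq_dist_le:
  fixes f fs f' k :: "'h::real_inner"
  assumes eta: "eta > 0" and lam: "lam \<ge> 0"
    and close: "dist f' ((1 - eta * lam) *\<^sub>R f - (eta * c) *\<^sub>R k) \<le> e"
    and tangent: "c * (inner fs k - inner f k) \<le> ls - lf"
  shows "(norm (f' - fs))\<^sup>2 \<le> (norm (f - fs))\<^sup>2 + 2 * eta * (ls - lf)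
           + eta * lam * ((norm fs)\<^sup>2 - (norm f)\<^sup>2) + 2 * e * norm (f - fs)
           + eta\<^sup>2 * (norm ((1 / eta) *\<^sub>R (f - f')))\<^sup>2"
proof -
  define g where "g = (1 - eta * lam) *\<^sub>R f - (eta * c) *\<^sub>R k"
  define a where "a = f - fs"
  define d where "d = f - f'"
  have sq_dist: "(norm (f' - fs))\<^sup>2 = (norm a)\<^sup>2 - 2 * inner d a + (norm d)\<^sup>2"
    by (simp add: a_def d_def power2_norm_eq_inner inner_diff_left inner_diff_right inner_commute)
  have step_sq: "eta\<^sup>2 * (norm ((1 / eta) *\<^sub>R d))\<^sup>2 = (norm d)\<^sup>2"
    using eta by (simp add: power_mult_distrib power2_eq_square)
  have d_eq: "d = eta *\<^sub>R (lam *\<^sub>R f + c *\<^sub>R k) + (g - f')"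
    by (simp add: d_def g_def algebra_simps)
  have inner_da: "inner d a = eta * (lam * inner f a + c * (inner f k - inner fs k)) + inner (g - f') a"
    by (simp add: d_eq a_def inner_add_left inner_diff_right inner_commute algebra_simps)
  have "\<bar>inner (g - f') a\<bar> \<le> norm (g - f') * norm a" by (rule Cauchy_Schwarz_ineq2)
  also have "\<dots> \<le> e * norm a"
    using close by (intro mult_right_mono) (auto simp: g_def dist_norm norm_minus_commute)
  finally have error: "- (e * norm a) \<le> inner (g - f') a" by linarith
  have "0 \<le> (norm (f - fs))\<^sup>2" by simp
  then have "((norm f)\<^sup>2 - (norm fs)\<^sup>2) / 2 \<le> inner f a"
    by (simp add: a_def power2_norm_eq_inner inner_diff_left inner_diff_right inner_commute)
  then have regularizer: "eta * (lam * (((norm f)\<^sup>2 - (norm fs)\<^sup>2) / 2)) \<le> eta * (lam * inner f a)"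
    using eta lam by (intro mult_left_mono) auto
  have loss: "eta * (lf - ls) \<le> eta * (c * (inner f k - inner fs k))"
    using tangent eta by (intro mult_left_mono) (auto simp: right_diff_distrib)
  show ?thesis
    unfolding sq_dist d_def[symmetric] step_sq a_def[symmetric]
    using inner_da error regularizer loss by (simp add: algebra_simps)
qed

lemma polk_step_sq_dist_le:
  fixes kf :: "'a \<Rightarrow> 'h::real_inner" and x :: 'a
  assumes f: "f \<in> hspan kf D" and eta: "eta > 0" and lam: "lam \<ge> 0" and eps: "eps \<ge> 0"
    and convex: "convex_on UNIV (\<lambda>z. loss z y)"
    and deriv: "\<And>z. ((\<lambda>z. loss z y) has_real_derivative dl z y) (at z)"
  defines "f' \<equiv> snd (polk_step kf dl lam eta eps (D, f) (x, y))"
  shows "(norm (f' - fs))\<^sup>2 \<le> (norm (f - fs))\<^sup>2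
           + 2 * eta * (loss (heval kf fs x) y - loss (heval kf f x) y)
           + eta * lam * ((norm fs)\<^sup>2 - (norm f)\<^sup>2) + 2 * eps * norm (f - fs)
           + eta\<^sup>2 * (norm ((1 / eta) *\<^sub>R (f - f')))\<^sup>2"
proof (rule perturbed_gradient_step_sq_dist_le[OF eta lam])
  show "dist f' ((1 - eta * lam) *\<^sub>R f - (eta * dl (heval kf f x) y) *\<^sub>R kf x) \<le> eps"
    unfolding f'_def using polk_step_dist_le[OF f eps] .
  have "((\<lambda>z. loss z y) has_field_derivative dl (heval kf f x) y) (at (heval kf f x) within UNIV)"
    using deriv by simp
  from convex_on_imp_above_tangent[OF convex connected_UNIV _ _ this]
  show "dl (heval kf f x) y * (inner fs (kf x) - inner f (kf x))
          \<le> loss (heval kf fs x) y - loss (heval kf f x) y"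
    by (simp add: heval_def)
qed

lemma (in prob_space) integral_le_descent_bound:
  fixes X Ls Lf N :: "'a \<Rightarrow> real" and sigma :: real
  assumes bound: "AE z in M. X z \<le> K + 2 * eta * (Ls z - Lf z) + eta\<^sup>2 * N z"
    and nonneg: "AE z in M. 0 \<le> X z"
    and int: "integrable M Ls" "integrable M Lf" "integrable M N"
    and N_le: "(\<integral>z. N z \<partial>M) \<le> sigma\<^sup>2"
  shows "(\<integral>z. X z \<partial>M) \<le> K + 2 * eta * ((\<integral>z. Ls z \<partial>M) - (\<integral>z. Lf z \<partial>M)) + eta\<^sup>2 * sigma\<^sup>2"
proof -
  define h where "h z = K + 2 * eta * (Ls z - Lf z) + eta\<^sup>2 * N z" for z
  have "(\<integral>z. X z \<partial>M) \<le> (\<integral>z. h z \<partial>M)"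
  proof (rule integral_mono_AE')
    show "integrable M h" unfolding h_def using int by auto
    show "AE z in M. X z \<le> h z" using bound by (simp add: h_def)
    show "AE z in M. 0 \<le> h z" using bound nonneg by eventually_elim (simp add: h_def)
  qed
  also have "(\<integral>z. h z \<partial>M) = K + 2 * eta * ((\<integral>z. Ls z \<partial>M) - (\<integral>z. Lf z \<partial>M)) + eta\<^sup>2 * (\<integral>z. N z \<partial>M)"
    unfolding h_def using int by (simp add: prob_space)
  also have "\<dots> \<le> K + 2 * eta * ((\<integral>z. Ls z \<partial>M) - (\<integral>z. Lf z \<partial>M)) + eta\<^sup>2 * sigma\<^sup>2"
    using N_le by (simp add: mult_left_mono)
  finally show ?thesis .
qed

theorem lemma1:
  fixes kf :: "real ^ 'p \<Rightarrow> 'h::{real_inner, complete_space}"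
    and P :: "((real ^ 'p) \<times> real) measure"
    and Xs :: "(real ^ 'p) set" and Ys :: "real set"
    and loss dl :: "real \<Rightarrow> real \<Rightarrow> real"
    and lam C Xk sigma :: real
    and eta eps :: "nat \<Rightarrow> real"
    and fstar :: 'h
  assumes rkhs: "closure (span (range kf)) = UNIV"
    and kf_meas: "kf \<in> borel_measurable borel"
    and prob: "prob_space P" and sets_P: "sets P = sets borel"
    and supp: "AE z in P. z \<in> Xs \<times> Ys"
    and lam_pos: "lam > 0" and eta_pos: "\<And>t. eta t > 0" and eps_pos: "\<And>t. eps t > 0"
    and A1: "compact Xs" "compact Ys" "\<And>x. x \<in> Xs \<Longrightarrow> sqrt (inner (kf x) (kf x)) \<le> Xk"
    and A2: "\<And>z z' y. y \<in> Ys \<Longrightarrow> \<bar>loss z y - loss z' y\<bar> \<le> C * \<bar>z - z'\<bar>"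
    and A3: "\<And>y. y \<in> Ys \<Longrightarrow> convex_on UNIV (\<lambda>z. loss z y)"
            "\<And>z y. y \<in> Ys \<Longrightarrow> ((\<lambda>z. loss z y) has_real_derivative dl z y) (at z)"
    and loss_meas: "(\<lambda>(z, y). loss z y) \<in> borel_measurable borel"
    and risk_defined: "\<And>f. integrable P (\<lambda>z. loss (heval kf f (fst z)) (snd z))"
    and fstar_min: "\<And>f. risk P kf loss lam fstar \<le> risk P kf loss lam f"
    and step_meas: "\<And>s t. (\<forall>i<t. s i \<in> Xs \<times> Ys) \<Longrightarrow>
            (\<lambda>z. snd (polk kf dl lam eta eps (s(t := z)) (Suc t))) \<in> borel_measurable P"
    and A4: "\<And>s t. (\<forall>i<t. s i \<in> Xs \<times> Ys) \<Longrightarrow>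
            integrable P (\<lambda>z. (norm ((1 / eta t) *\<^sub>R (snd (polk kf dl lam eta eps s t)
                                 - snd (polk kf dl lam eta eps (s(t := z)) (Suc t)))))\<^sup>2) \<and>
            (\<integral>z. (norm ((1 / eta t) *\<^sub>R (snd (polk kf dl lam eta eps s t)
                                 - snd (polk kf dl lam eta eps (s(t := z)) (Suc t)))))\<^sup>2 \<partial>P) \<le> sigma\<^sup>2"
  shows "\<forall>i<t. s i \<in> Xs \<times> Ys \<Longrightarrow>
    (\<integral>z. (norm (snd (polk kf dl lam eta eps (s(t := z)) (Suc t)) - fstar))\<^sup>2 \<partial>P)
      \<le> (norm (snd (polk kf dl lam eta eps s t) - fstar))\<^sup>2
         - 2 * eta t * (risk P kf loss lam (snd (polk kf dl lam eta eps s t)) - risk P kf loss lam fstar)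
         + 2 * eps t * norm (snd (polk kf dl lam eta eps s t) - fstar)
         + (eta t)\<^sup>2 * sigma\<^sup>2"
proof -
  assume hs: "\<forall>i<t. s i \<in> Xs \<times> Ys"
  interpret prob_space P by (rule prob)
  define f where "f = snd (polk kf dl lam eta eps s t)"
  define f' where "f' z = snd (polk kf dl lam eta eps (s(t := z)) (Suc t))" for z
  define L where "L g z = loss (heval kf g (fst z)) (snd z)" for g z
  have f'_step: "f' z = snd (polk_step kf dl lam (eta t) (eps t) (fst (polk kf dl lam eta eps s t), f) z)" for z
    using polk_cong[of t "s(t := z)" s kf dl lam eta eps] by (simp add: f'_def f_def)
  have "AE z in P. (norm (f' z - fstar))\<^sup>2
          \<le> ((norm (f - fstar))\<^sup>2 + eta t * lam * ((norm fstar)\<^sup>2 - (norm f)\<^sup>2) + 2 * eps t * norm (f - fstar))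
            + 2 * eta t * (L fstar z - L f z) + (eta t)\<^sup>2 * (norm ((1 / eta t) *\<^sub>R (f - f' z)))\<^sup>2"
    using supp
  proof eventually_elim
    case (elim z)
    then obtain x y where z: "z = (x, y)" and y: "y \<in> Ys" by auto
    show ?case
      using polk_step_sq_dist_le[where kf = kf and loss = loss and dl = dl and lam = lam and y = y
          and eta = "eta t" and eps = "eps t" and x = x and fs = fstar,
          OF polk_in_hspan[of kf dl lam eta eps s t, folded f_def] eta_pos _ _ A3(1,2)[OF y]]
        lam_pos eps_pos[of t]
      by (simp add: z f'_step L_def f_def algebra_simps)
  qed
  then have "(\<integral>z. (norm (f' z - fstar))\<^sup>2 \<partial>P)
      \<le> ((norm (f - fstar))\<^sup>2 + eta t * lam * ((norm fstar)\<^sup>2 - (norm f)\<^sup>2) + 2 * eps t * norm (f - fstar))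
         + 2 * eta t * ((\<integral>z. L fstar z \<partial>P) - (\<integral>z. L f z \<partial>P)) + (eta t)\<^sup>2 * sigma\<^sup>2"
    using A4[OF hs] risk_defined unfolding L_def f_def f'_def
    by (intro integral_le_descent_bound) auto
  then show ?thesis
    by (simp add: f_def f'_def L_def risk_def algebra_simps)
qed

end
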